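(* Every circuit $c$ of $\mathsf{ACirc}$ is equivalent (equal in AIH, equivalently having the same denotation) to a circuit containing precisely one occurrence of $\mathbf 1$ and no occurrence of $\mathbf 1^{op}$.
   Context: Fix a field $k$. Circuits: terms built from generators with sorts $(n,m)$: copier $\Delta:(1,2)$, discard $!:(1,0)$, amplifier $\mathsf{s}_r:(1,1)$ ($r\in k$), register $\mathsf{x}:(1,1)$, adder $+:(2,1)$, zero $0:(0,1)$, one $\mathbf{1}:(0,1)$; mirror images $\Delta^{op}:(2,1)$, $!^{op}:(0,1)$, $\mathsf{s}_r^{op}$, $\mathsf{x}^{op}:(1,1)$, $+^{op}:(1,2)$, $0^{op}:(1,0)$, $\mathbf{1}^{op}:(1,0)$; $\mathrm{id}_0:(0,0),\mathrm{id}_1:(1,1),\mathrm{sw}:(2,2)$; closed under $;$ and $\oplus$; $\mathsf{ACirc}$ is the resulting prop. Denotation over the field $k(x)$ of polynomial fractions: $[\![\Delta]\!]=\{(p,(p,p))\}$, $[\![!]\!]=\{(p,\bullet)\}$, $[\![+]\!]=\{((p,q),p+q)\}$, $[\![0]\!]=\{(\bullet,0)\}$, $[\![\mathbf 1]\!]=\{(\bullet,1)\}$, $[\![\mathsf s_r]\!]=\{(p,rp)\}$, $[\![\mathsf x]\!]=\{(p,px)\}$; mirrored generators denote converse relations; structural ones identity, swap, $\{(\bullet,\bullet)\}$; $;$ relational composition, $\oplus$ product. AIH is the equational theory of Affine Interacting Hopf Algebras, sound and complete for this semantics. *)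

theory Defs
  imports "HOL-Computational_Algebra.Polynomial" "HOL-Computational_Algebra.Fraction_Field"
begin

text \<open>Circuit terms of ACirc (generators, mirror images, structural generators,
  sequential composition Seq (;) and monoidal product Par (\<oplus>)).\<close>

datatype 'k circ =
    Copy | Disc | Amp 'k | Reg | Add | Zero | One
  | CopyOp | DiscOp | AmpOp 'k | RegOp | AddOp | ZeroOp | OneOp
  | Id0 | Id1 | Sw
  | Seq "'k circ" "'k circ"
  | Par "'k circ" "'k circ"

inductive has_sort :: "'k circ \<Rightarrow> nat \<Rightarrow> nat \<Rightarrow> bool" where
  "has_sort Copy 1 2"
| "has_sort Disc 1 0"
| "has_sort (Amp r) 1 1"
| "has_sort Reg 1 1"
| "has_sort Add 2 1"
| "has_sort Zero 0 1"
| "has_sort One 0 1"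
| "has_sort CopyOp 2 1"
| "has_sort DiscOp 0 1"
| "has_sort (AmpOp r) 1 1"
| "has_sort RegOp 1 1"
| "has_sort AddOp 1 2"
| "has_sort ZeroOp 1 0"
| "has_sort OneOp 1 0"
| "has_sort Id0 0 0"
| "has_sort Id1 1 1"
| "has_sort Sw 2 2"
| "has_sort c n m \<Longrightarrow> has_sort d m l \<Longrightarrow> has_sort (Seq c d) n l"
| "has_sort c n m \<Longrightarrow> has_sort d n' m' \<Longrightarrow> has_sort (Par c d) (n + n') (m + m')"

type_synonym 'k ratfun = "'k poly fract"

definition xvar :: "'k::field ratfun" where
  "xvar = Fract [:0, 1:] 1"

definition const :: "'k::field \<Rightarrow> 'k ratfun" where
  "const r = Fract [:r:] 1"

fun sem :: "'k::field circ \<Rightarrow> ('k ratfun list \<times> 'k ratfun list) set" where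
  "sem Copy = {([p], [p, p]) | p. True}"
| "sem Disc = {([p], []) | p. True}"
| "sem (Amp r) = {([p], [const r * p]) | p. True}"
| "sem Reg = {([p], [p * xvar]) | p. True}"
| "sem Add = {([p, q], [p + q]) | p q. True}"
| "sem Zero = {([], [0])}"
| "sem One = {([], [1])}"
| "sem CopyOp = {([p, p], [p]) | p. True}"
| "sem DiscOp = {([], [p]) | p. True}"
| "sem (AmpOp r) = {([const r * p], [p]) | p. True}"
| "sem RegOp = {([p * xvar], [p]) | p. True}"
| "sem AddOp = {([p + q], [p, q]) | p q. True}"
| "sem ZeroOp = {([0], [])}"
| "sem OneOp = {([1], [])}"
| "sem Id0 = {([], [])}"
| "sem Id1 = {([p], [p]) | p. True}"
| "sem Sw = {([p, q], [q, p]) | p q. True}"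
| "sem (Seq c d) = sem c O sem d"
| "sem (Par c d) = {(a @ a', b @ b') | a b a' b'. (a, b) \<in> sem c \<and> (a', b') \<in> sem d}"

fun count_one :: "'k circ \<Rightarrow> nat" where
  "count_one One = 1"
| "count_one (Seq c d) = count_one c + count_one d"
| "count_one (Par c d) = count_one c + count_one d"
| "count_one _ = 0"

fun count_one_op :: "'k circ \<Rightarrow> nat" where
  "count_one_op OneOp = 1"
| "count_one_op (Seq c d) = count_one_op c + count_one_op d"
| "count_one_op (Par c d) = count_one_op c + count_one_op d"
| "count_one_op _ = 0"

end

theory Submission
  imports Defs
begin

text \<open>Give every circuit one extra wire on top, on which each \<open>One\<close> becomes a copier
  \<open>Copy\<close> and each \<open>OneOp\<close> a co-copier \<open>CopyOp\<close>; in a parallel composition the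
  extra wire is swapped past the outputs of the left factor and back. If the extra wire carries
  the value \<open>k\<close>, the new circuit passes \<open>k\<close> through and otherwise behaves like the old
  one with the constant \<open>1\<close> replaced by \<open>k\<close>. Feeding the extra wire with a single
  \<open>One\<close> and discarding it at the end therefore recovers the original denotation.\<close>

fun arity_in :: "'k circ \<Rightarrow> nat" and arity_out :: "'k circ \<Rightarrow> nat" where
  "arity_in Copy = 1" | "arity_in Disc = 1" | "arity_in (Amp r) = 1" | "arity_in Reg = 1"
| "arity_in Add = 2" | "arity_in Zero = 0" | "arity_in One = 0" | "arity_in CopyOp = 2"
| "arity_in DiscOp = 0" | "arity_in (AmpOp r) = 1" | "arity_in RegOp = 1" | "arity_in AddOp = 1"
| "arity_in ZeroOp = 1" | "arity_in OneOp = 1" | "arity_in Id0 = 0" | "arity_in Id1 = 1"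
| "arity_in Sw = 2" | "arity_in (Seq c d) = arity_in c"
| "arity_in (Par c d) = arity_in c + arity_in d"
| "arity_out Copy = 2" | "arity_out Disc = 0" | "arity_out (Amp r) = 1" | "arity_out Reg = 1"
| "arity_out Add = 1" | "arity_out Zero = 1" | "arity_out One = 1" | "arity_out CopyOp = 1"
| "arity_out DiscOp = 1" | "arity_out (AmpOp r) = 1" | "arity_out RegOp = 1" | "arity_out AddOp = 2"
| "arity_out ZeroOp = 0" | "arity_out OneOp = 0" | "arity_out Id0 = 0" | "arity_out Id1 = 1"
| "arity_out Sw = 2" | "arity_out (Seq c d) = arity_out d"
| "arity_out (Par c d) = arity_out c + arity_out d"

lemma has_sort_arity: "has_sort c n m \<Longrightarrow> arity_in c = n \<and> arity_out c = m"
  by (induction rule: has_sort.induct) auto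

lemma has_sort_ParI:
  "has_sort c n m \<Longrightarrow> has_sort d n' m' \<Longrightarrow> N = n + n' \<Longrightarrow> M = m + m' \<Longrightarrow>
   has_sort (Par c d) N M"
  using has_sort.intros(19) by blast

lemma has_sort_Par_Id1: "has_sort c n m \<Longrightarrow> has_sort (Par Id1 c) (Suc n) (Suc m)"
  by (rule has_sort_ParI[OF has_sort.intros(16)]) simp_all

lemmas has_sort_intros_Suc = has_sort.intros[unfolded numeral_2_eq_2 One_nat_def]

lemma sem_Par_Id1: "sem (Par Id1 c) = {(p # a, p # b) | p a b. (a, b) \<in> sem c}"
  (is "?lhs = ?rhs")
proof (intro set_eqI iffI)
  fix z assume "z \<in> ?lhs"
  then show "z \<in> ?rhs" by auto
next
  fix z assume "z \<in> ?rhs"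
  then obtain p a b where "z = ([p] @ a, [p] @ b)" "(a, b) \<in> sem c" by auto
  then show "z \<in> ?lhs" by (simp only: sem.simps) blast
qed

fun wires :: "nat \<Rightarrow> 'k circ" where
  "wires 0 = Id0"
| "wires (Suc n) = Par Id1 (wires n)"

fun move_down :: "nat \<Rightarrow> 'k circ" where
  "move_down 0 = Id1"
| "move_down (Suc m) = Seq (Par Sw (wires m)) (Par Id1 (move_down m))"

fun move_up :: "nat \<Rightarrow> 'k circ" where
  "move_up 0 = Id1"
| "move_up (Suc m) = Seq (Par Id1 (move_up m)) (Par Sw (wires m))"

lemma has_sort_wires: "has_sort (wires n) n n"
  by (induction n) (auto intro: has_sort_intros_Suc has_sort_Par_Id1)

lemma has_sort_Par_Sw_wires: "has_sort (Par Sw (wires m)) (Suc (Suc m)) (Suc (Suc m))"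
  by (rule has_sort_ParI[OF has_sort.intros(17) has_sort_wires]) simp_all

lemma has_sort_move_down: "has_sort (move_down m) (Suc m) (Suc m)"
  by (induction m) (auto intro: has_sort_intros_Suc has_sort_Par_Id1 has_sort_Par_Sw_wires)

lemma has_sort_move_up: "has_sort (move_up m) (Suc m) (Suc m)"
  by (induction m) (auto intro: has_sort_intros_Suc has_sort_Par_Id1 has_sort_Par_Sw_wires)

lemma sem_wires: "sem (wires n) = {(a, a) | a. length a = n}"
proof (induction n)
  case (Suc n)
  show ?case unfolding wires.simps sem_Par_Id1 Suc.IH by (auto simp: length_Suc_conv)
qed simp

lemma sem_Par_wires_right:
  "sem (Par c (wires n)) = {(a @ x, b @ x) | a b x. (a, b) \<in> sem c \<and> length x = n}"
  by (auto simp: sem_wires)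

lemma sem_Par_wires_left:
  "sem (Par (wires n) c) = {(x @ a, x @ b) | a b x. (a, b) \<in> sem c \<and> length x = n}"
  by (auto simp: sem_wires)

lemma sem_Par_Sw_wires:
  "sem (Par Sw (wires m)) = {(p # q # a, q # p # a) | p q a. length a = m}" (is "?lhs = ?rhs")
proof (intro set_eqI iffI)
  fix z assume "z \<in> ?lhs"
  then show "z \<in> ?rhs" by (auto simp: sem_wires)
next
  fix z assume "z \<in> ?rhs"
  then obtain p q a where "z = ([p, q] @ a, [q, p] @ a)" "length a = m" by auto
  then show "z \<in> ?lhs" by (simp only: sem.simps sem_wires) blast
qed

lemma sem_move_down: "sem (move_down m) = {(k # b, b @ [k]) | k b. length b = m}"
proof (induction m)
  case (Suc m)
  show ?case unfolding move_down.simps sem.simps(18) sem_Par_Sw_wires sem_Par_Id1 Suc.IH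
    by (auto simp: length_Suc_conv relcomp_unfold)
qed auto

lemma sem_move_up: "sem (move_up m) = {(b @ [k], k # b) | k b. length b = m}"
proof (induction m)
  case (Suc m)
  show ?case unfolding move_up.simps sem.simps(18) sem_Par_Sw_wires sem_Par_Id1 Suc.IH
    by (auto simp: length_Suc_conv relcomp_unfold)
qed auto

lemma sem_Par_move_down_wires:
  "sem (Par (move_down m) (wires n))
   = {(k # b @ x, b @ k # x) | k b x. length b = m \<and> length x = n}"
  unfolding sem_Par_wires_right sem_move_down by auto (metis append_Cons append_assoc append_Nil)+

lemma sem_Par_move_up_wires:
  "sem (Par (move_up m) (wires n))
   = {(b @ k # x, k # b @ x) | k b x. length b = m \<and> length x = n}"
  unfolding sem_Par_wires_right sem_move_up by auto (metis append_Cons append_assoc append_Nil)+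

type_synonym 'k circ_rel = "('k ratfun list \<times> 'k ratfun list) set"

fun sem_one_as :: "'k::field ratfun \<Rightarrow> 'k circ \<Rightarrow> 'k circ_rel" where
  "sem_one_as k One = {([], [k])}"
| "sem_one_as k OneOp = {([k], [])}"
| "sem_one_as k (Seq c d) = sem_one_as k c O sem_one_as k d"
| "sem_one_as k (Par c d) =
     {(a @ a', b @ b') | a b a' b'. (a, b) \<in> sem_one_as k c \<and> (a', b') \<in> sem_one_as k d}"
| "sem_one_as k g = sem g"

lemma sem_one_as_1: "sem_one_as 1 c = sem c"
  by (induction c) auto

lemma sem_one_as_length:
  "has_sort c n m \<Longrightarrow> (a, b) \<in> sem_one_as k c \<Longrightarrow> length a = n \<and> length b = m"
  by (induction arbitrary: a b rule: has_sort.induct) fastforce+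

definition threaded :: "('k ratfun \<Rightarrow> 'k circ_rel) \<Rightarrow> 'k circ_rel" where
  "threaded R = {(k # a, k # b) | k a b. (a, b) \<in> R k}"

lemma threaded_relcomp: "threaded R O threaded S = threaded (\<lambda>k. R k O S k)"
  unfolding threaded_def by blast

lemma sem_Par_threaded_wires:
  assumes "sem c = threaded R"
  shows "sem (Par c (wires n))
         = {(k # a @ x, k # b @ x) | k a b x. (a, b) \<in> R k \<and> length x = n}"
    (is "?lhs = ?rhs")
proof (intro set_eqI iffI)
  fix z assume "z \<in> ?lhs"
  then show "z \<in> ?rhs" unfolding sem_Par_wires_right assms threaded_def by auto blast
next
  fix z assume "z \<in> ?rhs"
  then obtain k a b x where "z = ((k # a) @ x, (k # b) @ x)" "(a, b) \<in> R k" "length x = n"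
    by auto
  then show "z \<in> ?lhs" unfolding sem_Par_wires_right assms threaded_def by blast
qed

lemma sem_Par_wires_threaded:
  assumes "sem d = threaded S"
  shows "sem (Par (wires m) d)
         = {(y @ k # a, y @ k # b) | k a b y. (a, b) \<in> S k \<and> length y = m}"
  unfolding sem_Par_wires_left assms threaded_def by blast

lemma sem_Seq_move_down:
  assumes sem_c: "sem c = threaded R"
    and len: "\<And>k a b. (a, b) \<in> R k \<Longrightarrow> length b = m"
  shows "sem (Seq (Par c (wires n)) (Par (move_down m) (wires n)))
         = {(k # a @ x, b @ k # x) | k a b x. (a, b) \<in> R k \<and> length x = n}"
    (is "_ = ?rhs")
proof (intro set_eqI iffI)
  fix z assume "z \<in> sem (Seq (Par c (wires n)) (Par (move_down m) (wires n)))"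
  then obtain k a b x k' b' x' where "z = (k # a @ x, b' @ k' # x')" and ab: "(a, b) \<in> R k"
    and "k # b @ x = k' # b' @ x'" "length b' = m" "length x = n"
    unfolding sem.simps(18) sem_Par_threaded_wires[OF sem_c] sem_Par_move_down_wires by blast
  moreover have "length b = m" using len ab .
  ultimately show "z \<in> ?rhs" by auto
next
  fix z assume "z \<in> ?rhs"
  then obtain k a b x where "z = (k # a @ x, b @ k # x)" "(a, b) \<in> R k" "length x = n"
    by blast
  moreover from this have "(k # a @ x, k # b @ x) \<in> sem (Par c (wires n))"
    and "(k # b @ x, b @ k # x) \<in> sem (Par (move_down m) (wires n))"
    unfolding sem_Par_threaded_wires[OF sem_c] sem_Par_move_down_wires using len by blast+
  ultimately show "z \<in> sem (Seq (Par c (wires n)) (Par (move_down m) (wires n)))"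
    unfolding sem.simps(18) by blast
qed

lemma sem_Seq_move_up:
  assumes sem_d: "sem d = threaded S"
    and len: "\<And>k a b. (a, b) \<in> S k \<Longrightarrow> length b = m'"
  shows "sem (Seq (Par (wires m) d) (Par (move_up m) (wires m')))
         = {(y @ k # a, k # y @ b) | k a b y. (a, b) \<in> S k \<and> length y = m}"
    (is "_ = ?rhs")
proof (intro set_eqI iffI)
  fix z assume "z \<in> sem (Seq (Par (wires m) d) (Par (move_up m) (wires m')))"
  then obtain k a b y k' y' x' where "z = (y @ k # a, k' # y' @ x')" "(a, b) \<in> S k"
    and "length y = m" "y @ k # b = y' @ k' # x'" "length y' = m"
    unfolding sem.simps(18) sem_Par_wires_threaded[OF sem_d] sem_Par_move_up_wires by blast
  then show "z \<in> ?rhs" by auto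
next
  fix z assume "z \<in> ?rhs"
  then obtain k a b y where "z = (y @ k # a, k # y @ b)" "(a, b) \<in> S k" "length y = m"
    by blast
  moreover from this have "(y @ k # a, y @ k # b) \<in> sem (Par (wires m) d)"
    and "(y @ k # b, k # y @ b) \<in> sem (Par (move_up m) (wires m'))"
    unfolding sem_Par_wires_threaded[OF sem_d] sem_Par_move_up_wires using len by blast+
  ultimately show "z \<in> sem (Seq (Par (wires m) d) (Par (move_up m) (wires m')))"
    unfolding sem.simps(18) by blast
qed

lemma relcomp_interleave:
  assumes out_R: "\<And>k a b. (a, b) \<in> R k \<Longrightarrow> length b = m"
    and in_S: "\<And>k a b. (a, b) \<in> S k \<Longrightarrow> length a = n"
  shows "{(k # a @ x, b @ k # x) | k a b x. (a, b) \<in> R k \<and> length x = n}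
           O {(y @ k # a, k # y @ b) | k a b y. (a, b) \<in> S k \<and> length y = m}
         = threaded (\<lambda>k. {(a @ a', b @ b') | a b a' b'. (a, b) \<in> R k \<and> (a', b') \<in> S k})"
    (is "?R O ?S = ?T")
proof (intro set_eqI iffI)
  fix z assume "z \<in> ?R O ?S"
  then obtain k a b x k' a' b' y where z: "z = (k # a @ x, k' # y @ b')" and ab: "(a, b) \<in> R k"
    and "(a', b') \<in> S k'" "b @ k # x = y @ k' # a'" "length y = m"
    by blast
  moreover from this have "y = b" "k' = k" "a' = x"
    using out_R[OF ab] by auto
  ultimately show "z \<in> ?T"
    unfolding threaded_def by blast
next
  fix z assume "z \<in> ?T"
  then obtain k a b a' b'
    where "z = (k # a @ a', k # b @ b')" "(a, b) \<in> R k" "(a', b') \<in> S k"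
    unfolding threaded_def by blast
  moreover from this have "(k # a @ a', b @ k # a') \<in> ?R" "(b @ k # a', k # b @ b') \<in> ?S"
    using out_R in_S by blast+
  ultimately show "z \<in> ?R O ?S" by blast
qed

fun share_one :: "'k circ \<Rightarrow> 'k circ" where
  "share_one One = Copy"
| "share_one OneOp = CopyOp"
| "share_one (Seq c d) = Seq (share_one c) (share_one d)"
| "share_one (Par c d) =
     Seq (Par (share_one c) (wires (arity_in d)))
    (Seq (Par (move_down (arity_out c)) (wires (arity_in d)))
    (Seq (Par (wires (arity_out c)) (share_one d))
         (Par (move_up (arity_out c)) (wires (arity_out d)))))"
| "share_one g = Par Id1 g"

lemma has_sort_share_one: "has_sort c n m \<Longrightarrow> has_sort (share_one c) (Suc n) (Suc m)"
proof (induction rule: has_sort.induct)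
  case (19 c n m d n' m')
  then have "arity_in d = n'" "arity_out c = m" "arity_out d = m'"
    using has_sort_arity by blast+
  with 19 show ?case
    by (auto intro!: has_sort.intros(18) has_sort_ParI
        has_sort_wires has_sort_move_down has_sort_move_up)
qed (auto intro: has_sort_intros_Suc has_sort_Par_Id1 simp: numeral_3_eq_3)

lemma count_wires [simp]: "count_one (wires n) = 0" "count_one_op (wires n) = 0"
  by (induction n) auto

lemma count_move_down [simp]: "count_one (move_down n) = 0" "count_one_op (move_down n) = 0"
  by (induction n) auto

lemma count_move_up [simp]: "count_one (move_up n) = 0" "count_one_op (move_up n) = 0"
  by (induction n) auto

lemma count_share_one: "count_one (share_one c) = 0" "count_one_op (share_one c) = 0"
  by (induction c) auto

lemma sem_share_one: "has_sort c n m \<Longrightarrow> sem (share_one c) = threaded (\<lambda>k. sem_one_as k c)"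
proof (induction rule: has_sort.induct)
  case (18 c n m d l)
  then show ?case by (simp add: threaded_relcomp)
next
  case (19 c n m d n' m')
  note out_c = sem_one_as_length[OF "19.hyps"(1), THEN conjunct2]
    and in_d = sem_one_as_length[OF "19.hyps"(2), THEN conjunct1]
    and out_d = sem_one_as_length[OF "19.hyps"(2), THEN conjunct2]
  have "arity_in d = n'" "arity_out c = m" "arity_out d = m'"
    using "19.hyps" has_sort_arity by blast+
  then have "sem (share_one (Par c d))
      = sem (Seq (Par (share_one c) (wires n')) (Par (move_down m) (wires n')))
        O sem (Seq (Par (wires m) (share_one d)) (Par (move_up m) (wires m')))"
    by (simp only: share_one.simps sem.simps(18) O_assoc)
  also have "\<dots> = threaded (\<lambda>k. sem_one_as k (Par c d))"
    by (simp only: sem_Seq_move_down[OF "19.IH"(1) out_c] sem_Seq_move_up[OF "19.IH"(2) out_d]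
        relcomp_interleave[OF out_c in_d] sem_one_as.simps(4))
  finally show ?case .
qed (simp only: share_one.simps sem_Par_Id1 sem_one_as.simps threaded_def; auto)+

lemma sem_plug_threaded:
  assumes sem_c: "sem c = threaded R"
    and len: "\<And>a b. (a, b) \<in> R 1 \<Longrightarrow> length a = n \<and> length b = m"
  shows "sem (Seq (Par One (wires n)) (Seq c (Par Disc (wires m)))) = R 1"
proof -
  have one: "sem (Par One (wires n)) = {(a, 1 # a) | a. length a = n}"
    and disc: "sem (Par Disc (wires m)) = {(k # b, b) | k b. length b = m}"
    by (auto simp: sem_wires)
  show ?thesis
    unfolding sem.simps(18) one disc sem_c threaded_def using len by (auto simp: relcomp_unfold)
qed

theorem proposition12:
  fixes c :: "'k::field circ"
  assumes "has_sort c n m"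
  shows "\<exists>d :: 'k circ. has_sort d n m \<and> count_one d = 1 \<and> count_one_op d = 0
            \<and> sem d = sem c"
proof (intro exI conjI)
  let ?d = "Seq (Par One (wires n)) (Seq (share_one c) (Par Disc (wires m))) :: 'k circ"
  show "has_sort ?d n m"
    using assms by (auto intro!: has_sort.intros(18) has_sort_ParI has_sort_wires has_sort_share_one
        intro: has_sort.intros(2,7))
  show "count_one ?d = 1" "count_one_op ?d = 0"
    by (simp_all add: count_share_one)
  show "sem ?d = sem c"
    using sem_plug_threaded[OF sem_share_one[OF assms] sem_one_as_length[OF assms, where k = 1]]
    unfolding sem_one_as_1 .
qed

end
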